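(* Let $m\ge3$ and $2\le t\le m-1$. The hypergraph PIN model on the complete $t$-uniform hypergraph $K_{m,t}$ is strict Type $\mathcal S$.
   Context: Let $\mathcal M=\{1,\dots,m\}$. A hypergraph PIN model on $\mathcal H=(\mathcal M,\mathcal E)$, with $\mathcal E$ a finite multiset of subsets of $\mathcal M$, is defined as follows. Let $\mathcal E^{(n)}$ contain $n$ copies of each element of $\mathcal E$. Independent Bernoulli(1/2) variables $\xi_e$ are attached to the $e\in\mathcal E^{(n)}$, and $X^n_i=(\xi_e:e\in\mathcal E^{(n)},\ i\in e)$; the single-letter source $X_{\mathcal M}$ is the case $n=1$. $K_{m,t}=(\mathcal M,\mathcal E)$ is the hypergraph in which $\mathcal E$ contains exactly one copy of every $t$-element subset of $\mathcal M$. $\Delta(\mathcal P)=\frac1{|\mathcal P|-1}[\sum_{A\in\mathcal P}H(X_A)-H(X_{\mathcal M})]$ for partitions of $\mathcal M$ with at least 2 cells, where $X_A=(X_i:i\in A)$. The source is strict Type $\mathcal S$ if the singleton partition $\{\{1\},\dots,\{m\}\}$ is the unique minimizer of $\Delta$. *)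

theory Defs
  imports "HOL-Probability.Probability" "HOL-Library.Disjoint_Sets"
begin

definition pmf_entropy :: "'a pmf \<Rightarrow> real" where
  "pmf_entropy p = - (\<Sum>x\<in>set_pmf p. pmf p x * log 2 (pmf p x))"

text \<open>The (multi)set of hyperedges is given by a finite index
  set Ed together with an incidence map inc; each index e in Ed is one hyperedge
  inc e (so repeated hyperedges are allowed).\<close>
definition pin_xi :: "'e set \<Rightarrow> ('e \<Rightarrow> bool) pmf" where
  "pin_xi Ed = Pi_pmf Ed False (\<lambda>_. bernoulli_pmf (1/2))"

definition pin_Xi :: "'e set \<Rightarrow> ('e \<Rightarrow> nat set) \<Rightarrow> nat \<Rightarrow> ('e \<Rightarrow> bool) \<Rightarrow> ('e \<Rightarrow> bool option)" where
  "pin_Xi Ed inc i xi = (\<lambda>e. if e \<in> Ed \<and> i \<in> inc e then Some (xi e) else None)"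

definition pin_XA :: "'e set \<Rightarrow> ('e \<Rightarrow> nat set) \<Rightarrow> nat set \<Rightarrow> ('e \<Rightarrow> bool) \<Rightarrow> (nat \<Rightarrow> ('e \<Rightarrow> bool option) option)" where
  "pin_XA Ed inc A xi = (\<lambda>i. if i \<in> A then Some (pin_Xi Ed inc i xi) else None)"

definition pin_H :: "'e set \<Rightarrow> ('e \<Rightarrow> nat set) \<Rightarrow> nat set \<Rightarrow> real" where
  "pin_H Ed inc A = pmf_entropy (map_pmf (pin_XA Ed inc A) (pin_xi Ed))"

definition pin_Delta :: "nat set \<Rightarrow> 'e set \<Rightarrow> ('e \<Rightarrow> nat set) \<Rightarrow> nat set set \<Rightarrow> real" where
  "pin_Delta M Ed inc P =
     ((\<Sum>A\<in>P. pin_H Ed inc A) - pin_H Ed inc M) / (real (card P) - 1)"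

definition singleton_partition :: "nat set \<Rightarrow> nat set set" where
  "singleton_partition M = {{i} | i. i \<in> M}"

definition strict_type_S :: "nat set \<Rightarrow> 'e set \<Rightarrow> ('e \<Rightarrow> nat set) \<Rightarrow> bool" where
  "strict_type_S M Ed inc \<longleftrightarrow>
     partition_on M (singleton_partition M) \<and> card (singleton_partition M) \<ge> 2 \<and>
     (\<forall>P. partition_on M P \<and> card P \<ge> 2 \<and> P \<noteq> singleton_partition M \<longrightarrow>
          pin_Delta M Ed inc (singleton_partition M) < pin_Delta M Ed inc P)"

text \<open>Edges of K_{m,t}: exactly one copy of every t-element subset of {1..m}
  (index set = these subsets, incidence = identity).\<close>
definition K_edges :: "nat \<Rightarrow> nat \<Rightarrow> nat set set" where
  "K_edges m t = {S. S \<subseteq> {1..m} \<and> card S = t}"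

end

theory Submission
  imports Defs
begin

text \<open>For the PIN model, \<open>X_A\<close> is an injective image of the fair bits on the edges meeting \<open>A\<close>,
  so \<open>H(X_A)\<close> is the number of such edges. In \<open>K_{m,t}\<close> a set of size \<open>a\<close> misses exactly
  \<open>C(m-a,t)\<close> edges, hence
  \<open>\<Delta>(P) = C(m,t) - (\<Sum>\<^sub>A\<^sub>\<in>\<^sub>P C(m-|A|,t)) / (|P|-1)\<close>.
  Since \<open>b \<mapsto> C(b,t)/b\<close> is strictly increasing for \<open>t \<ge> 2\<close>, each cell satisfies
  \<open>(m-1) C(m-|A|,t) \<le> (m-|A|) C(m-1,t)\<close>, strictly unless \<open>|A| = 1\<close>; summing over the cells
  and using \<open>\<Sum>\<^sub>A\<^sub>\<in>\<^sub>P (m-|A|) = (|P|-1) m\<close> shows that the singleton partition is the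
  unique minimiser.\<close>

lemma pmf_entropy_uniform:
  assumes "finite (set_pmf p)" and "\<And>x. x \<in> set_pmf p \<Longrightarrow> pmf p x = c"
  shows "pmf_entropy p = - log 2 c"
proof -
  have "(\<Sum>x\<in>set_pmf p. pmf p x) = 1"
    using sum_pmf_eq_1[OF assms(1)] by simp
  then have "real (card (set_pmf p)) * c = 1"
    using assms(2) by simp
  moreover have "(\<Sum>x\<in>set_pmf p. pmf p x * log 2 (pmf p x)) = real (card (set_pmf p)) * c * log 2 c"
    using assms(2) by simp
  ultimately show ?thesis
    unfolding pmf_entropy_def by simp
qed

lemma pmf_entropy_inj_pin_xi:
  assumes "finite E" and "inj_on g (set_pmf (pin_xi E))"
  shows "pmf_entropy (map_pmf g (pin_xi E)) = real (card E)"
proof -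
  have supp: "set_pmf (pin_xi E) \<subseteq> {f. \<forall>x. x \<notin> E \<longrightarrow> f x = False}"
    unfolding pin_xi_def by (rule set_Pi_pmf_subset[OF assms(1)])
  have "pmf_entropy (map_pmf g (pin_xi E)) = - log 2 ((1/2) ^ card E)"
  proof (rule pmf_entropy_uniform)
    show "finite (set_pmf (map_pmf g (pin_xi E)))"
      using assms(1) by (simp add: pin_xi_def set_Pi_pmf finite_PiE_dflt)
  next
    fix y assume "y \<in> set_pmf (map_pmf g (pin_xi E))"
    then obtain f where f: "f \<in> set_pmf (pin_xi E)" "y = g f" by auto
    have "pmf (pin_xi E) f = (1/2) ^ card E"
      using f(1) supp assms(1) by (auto simp: pin_xi_def pmf_Pi)
    then show "pmf (map_pmf g (pin_xi E)) y = (1/2) ^ card E"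
      using pmf_map_inj[OF assms(2) f(1)] f(2) by simp
  qed
  also have "\<dots> = real (card E)"
    by (simp add: log_nat_power log_divide)
  finally show ?thesis .
qed

lemma map_pmf_pin_XA_eq_incident:
  assumes "finite Ed"
  shows "map_pmf (pin_XA Ed inc A) (pin_xi Ed) =
         map_pmf (pin_XA Ed inc A) (pin_xi {e\<in>Ed. inc e \<inter> A \<noteq> {}})"
proof -
  define E where "E = {e\<in>Ed. inc e \<inter> A \<noteq> {}}"
  define r where "r = (\<lambda>(f::'a \<Rightarrow> bool) x. if x \<in> E then f x else False)"
  have "pin_XA Ed inc A \<circ> r = pin_XA Ed inc A"
    by (auto simp: fun_eq_iff r_def pin_XA_def pin_Xi_def E_def)
  then have "map_pmf (pin_XA Ed inc A) (pin_xi Ed) = map_pmf (pin_XA Ed inc A) (map_pmf r (pin_xi Ed))"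
    by (simp add: map_pmf_comp comp_def)
  also have "map_pmf r (pin_xi Ed) = pin_xi E"
    unfolding pin_xi_def r_def by (rule Pi_pmf_subset[symmetric]) (auto simp: assms E_def)
  finally show ?thesis
    unfolding E_def .
qed

lemma inj_on_pin_XA:
  assumes "finite Ed"
  shows "inj_on (pin_XA Ed inc A) (set_pmf (pin_xi {e\<in>Ed. inc e \<inter> A \<noteq> {}}))"
proof (rule inj_onI)
  let ?E = "{e\<in>Ed. inc e \<inter> A \<noteq> {}}"
  have supp: "set_pmf (pin_xi ?E) \<subseteq> {f. \<forall>x. x \<notin> ?E \<longrightarrow> f x = False}"
    unfolding pin_xi_def by (rule set_Pi_pmf_subset) (use assms in auto)
  fix f1 f2
  assume f: "f1 \<in> set_pmf (pin_xi ?E)" "f2 \<in> set_pmf (pin_xi ?E)"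
    and eq: "pin_XA Ed inc A f1 = pin_XA Ed inc A f2"
  show "f1 = f2"
  proof
    fix x
    show "f1 x = f2 x"
    proof (cases "x \<in> ?E")
      case True
      then obtain i where i: "i \<in> inc x" "i \<in> A" "x \<in> Ed" by auto
      have "pin_XA Ed inc A f1 i = pin_XA Ed inc A f2 i"
        using eq by simp
      then have "pin_Xi Ed inc i f1 x = pin_Xi Ed inc i f2 x"
        using i by (simp add: pin_XA_def)
      then show ?thesis
        using i by (simp add: pin_Xi_def)
    next
      case False
      then show ?thesis using supp f by auto
    qed
  qed
qed

lemma pin_H_eq_card_incident:
  assumes "finite Ed"
  shows "pin_H Ed inc A = real (card {e\<in>Ed. inc e \<inter> A \<noteq> {}})"
  unfolding pin_H_def map_pmf_pin_XA_eq_incident[OF assms]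
  by (rule pmf_entropy_inj_pin_xi[OF _ inj_on_pin_XA[OF assms]]) (use assms in simp)

lemma finite_K_edges: "finite (K_edges m t)"
  unfolding K_edges_def by (rule finite_subset[of _ "Pow {1..m}"]) auto

lemma card_K_edges_meeting:
  assumes "A \<subseteq> {1..m}"
  shows "card {e\<in>K_edges m t. e \<inter> A \<noteq> {}} + ((m - card A) choose t) = m choose t"
proof -
  have "{e\<in>K_edges m t. e \<inter> A = {}} = {B. B \<subseteq> {1..m} - A \<and> card B = t}"
    unfolding K_edges_def by auto
  moreover have "card ({1..m} - A) = m - card A"
    using assms by (simp add: card_Diff_subset finite_subset)
  ultimately have "card {e\<in>K_edges m t. e \<inter> A = {}} = (m - card A) choose t"
    using n_subsets[of "{1..m} - A" t] by simp
  moreover have "card (K_edges m t) = m choose t"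
    unfolding K_edges_def using n_subsets[of "{1..m}" t] by simp
  moreover have "card ({e\<in>K_edges m t. e \<inter> A \<noteq> {}} \<union> {e\<in>K_edges m t. e \<inter> A = {}}) =
                 card {e\<in>K_edges m t. e \<inter> A \<noteq> {}} + card {e\<in>K_edges m t. e \<inter> A = {}}"
    by (rule card_Un_disjoint) (use finite_K_edges in auto)
  moreover have "{e\<in>K_edges m t. e \<inter> A \<noteq> {}} \<union> {e\<in>K_edges m t. e \<inter> A = {}} = K_edges m t"
    by auto
  ultimately show ?thesis
    by simp
qed

lemma pin_H_K_edges:
  assumes "A \<subseteq> {1..m}"
  shows "pin_H (K_edges m t) (\<lambda>e. e) A = real (m choose t) - real ((m - card A) choose t)"
  using pin_H_eq_card_incident[OF finite_K_edges[of m t], where inc = "\<lambda>e. e" and A = A]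
    arg_cong[OF card_K_edges_meeting[OF assms, of t], of real]
  by simp

lemma pin_Delta_K_edges:
  assumes P: "partition_on {1..m} P" and "2 \<le> card P" and "1 \<le> t"
  shows "pin_Delta {1..m} (K_edges m t) (\<lambda>e. e) P =
         real (m choose t) - real (\<Sum>A\<in>P. (m - card A) choose t) / (real (card P) - 1)"
proof -
  have "(\<Sum>A\<in>P. pin_H (K_edges m t) (\<lambda>e. e) A) =
        (\<Sum>A\<in>P. real (m choose t) - real ((m - card A) choose t))"
    using partition_onD1[OF P] by (intro sum.cong) (auto intro!: pin_H_K_edges)
  moreover have "pin_H (K_edges m t) (\<lambda>e. e) {1..m} = real (m choose t)"
    using pin_H_K_edges[of "{1..m}" m t] assms(3) by simp
  moreover have "real (card P) - 1 > 0"
    using assms(2) by simp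
  ultimately show ?thesis
    unfolding pin_Delta_def by (simp add: sum_subtractf field_simps)
qed

lemma binomial_strict_mono_upper:
  fixes b n k :: nat
  assumes "b < n" "1 \<le> k" "k \<le> n"
  shows "b choose k < n choose k"
proof (cases "k \<le> b")
  case True
  have "b choose k < Suc b choose k"
    using True assms(2) by (cases k) auto
  also have "\<dots> \<le> n choose k"
    using assms(1) by (intro binomial_right_mono) simp
  finally show ?thesis .
next
  case False
  then show ?thesis
    using assms(3) by (simp add: binomial_eq_0)
qed

lemma mult_choose_less_mult_choose:
  fixes b n t :: nat
  assumes "1 \<le> b" "b < n" "2 \<le> t" "t \<le> n"
  shows "n * (b choose t) < b * (n choose t)"
proof -
  have "t * (n * (b choose t)) = n * (b * ((b - 1) choose (t - 1)))"
    using times_binomial_minus1_eq[of t b] assms(3) by (simp add: ac_simps)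
  also have "\<dots> < n * (b * ((n - 1) choose (t - 1)))"
    using assms by (simp add: binomial_strict_mono_upper)
  also have "\<dots> = t * (b * (n choose t))"
    using times_binomial_minus1_eq[of t n] assms(3) by (simp add: ac_simps)
  finally show ?thesis
    by simp
qed

lemma mult_choose_le_mult_choose:
  fixes b n t :: nat
  assumes "1 \<le> b" "b \<le> n" "2 \<le> t" "t \<le> n"
  shows "n * (b choose t) \<le> b * (n choose t)"
proof (cases "b = n")
  case False
  then show ?thesis
    using mult_choose_less_mult_choose[of b n t] assms by simp
qed simp

lemma singleton_partition_eq_image: "singleton_partition M = (\<lambda>x. {x}) ` M"
  unfolding singleton_partition_def by auto

lemma partition_on_card_less:
  assumes "finite M" "partition_on M P" "2 \<le> card P" "A \<in> P"
  shows "card A < card M"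
proof -
  have "\<not> P \<subseteq> {A}"
    using card_mono[of "{A}" P] assms(3) by auto
  then obtain B where B: "B \<in> P" "B \<noteq> A"
    by blast
  have "B \<noteq> {}"
    using partition_onD3[OF assms(2)] B(1) by blast
  then obtain x where "x \<in> B"
    by blast
  moreover have "disjnt A B"
    using partition_onD2[OF assms(2)] assms(4) B by (auto dest: pairwiseD)
  ultimately have "A \<subset> M"
    using partition_onD1[OF assms(2)] assms(4) B(1) by (auto simp: disjnt_iff)
  then show ?thesis
    using assms(1) by (rule psubset_card_mono[rotated])
qed

lemma partition_on_sum_card:
  assumes "finite M" "partition_on M P"
  shows "(\<Sum>A\<in>P. card A) = card M"
proof -
  have "finite A" if "A \<in> P" for A
    using that assms(1) partition_onD1[OF assms(2)] by (metis Union_upper finite_subset)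
  then have "card (\<Union>P) = (\<Sum>A\<in>P. card A)"
    by (rule card_Union_disjoint[OF partition_onD2[OF assms(2)]])
  then show ?thesis
    using partition_onD1[OF assms(2)] by simp
qed

lemma partition_on_sum_card_diff:
  assumes "finite M" "partition_on M P"
  shows "(\<Sum>A\<in>P. card M - card A) = (card P - 1) * card M"
proof -
  have "card A \<le> card M" if "A \<in> P" for A
    using that assms partition_onD1 by (metis Union_upper card_mono)
  then have "(\<Sum>A\<in>P. card M - card A) + (\<Sum>A\<in>P. card A) = card P * card M"
    by (simp add: sum.distrib[symmetric])
  then show ?thesis
    using partition_on_sum_card[OF assms] by (simp add: diff_mult_distrib)
qed

lemma partition_on_eq_singletons:
  assumes "partition_on M P" "\<And>A. A \<in> P \<Longrightarrow> card A = 1"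
  shows "P = (\<lambda>x. {x}) ` M"
proof (rule equalityI)
  show "P \<subseteq> (\<lambda>x. {x}) ` M"
  proof
    fix A assume "A \<in> P"
    moreover obtain x where "A = {x}"
      using assms(2)[OF \<open>A \<in> P\<close>] by (rule card_1_singletonE)
    ultimately show "A \<in> (\<lambda>x. {x}) ` M"
      using partition_onD1[OF assms(1)] by blast
  qed
  show "(\<lambda>x. {x}) ` M \<subseteq> P"
  proof
    fix A assume "A \<in> (\<lambda>x. {x}) ` M"
    then obtain x where x: "x \<in> M" "A = {x}" by auto
    then obtain B where "B \<in> P" "x \<in> B"
      using partition_onD1[OF assms(1)] by blast
    then show "A \<in> P"
      using assms(2) x by (metis card_1_singletonE singletonD)
  qed
qed

lemma sum_choose_cell_complements_less:
  assumes M: "finite M" and P: "partition_on M P" and "2 \<le> card P" "P \<noteq> (\<lambda>x. {x}) ` M"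
    and t: "2 \<le> t" "t \<le> card M - 1"
  shows "(card M - 1) * (\<Sum>A\<in>P. (card M - card A) choose t) < (card P - 1) * card M * ((card M - 1) choose t)"
proof -
  let ?n = "card M"
  have cell: "1 \<le> card A \<and> card A < ?n" if "A \<in> P" for A
  proof -
    have "finite A"
      using that M partition_onD1[OF P] by (metis Union_upper finite_subset)
    moreover have "A \<noteq> {}"
      using that partition_onD3[OF P] by blast
    ultimately show ?thesis
      using partition_on_card_less[OF M P assms(3) that] by (simp add: Suc_le_eq card_gt_0_iff)
  qed
  obtain A0 where A0: "A0 \<in> P" "card A0 \<noteq> 1"
    using partition_on_eq_singletons[OF P] assms(4) by blast
  have "(\<Sum>A\<in>P. (?n - 1) * ((?n - card A) choose t)) < (\<Sum>A\<in>P. (?n - card A) * ((?n - 1) choose t))"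
  proof (rule sum_strict_mono_ex1)
    show "finite P"
      using finite_elements[OF M P] .
    show "\<forall>A\<in>P. (?n - 1) * ((?n - card A) choose t) \<le> (?n - card A) * ((?n - 1) choose t)"
    proof
      fix A assume "A \<in> P"
      then show "(?n - 1) * ((?n - card A) choose t) \<le> (?n - card A) * ((?n - 1) choose t)"
        using cell[OF \<open>A \<in> P\<close>] t by (intro mult_choose_le_mult_choose) auto
    qed
    have "(?n - 1) * ((?n - card A0) choose t) < (?n - card A0) * ((?n - 1) choose t)"
      using A0 cell[OF A0(1)] t by (intro mult_choose_less_mult_choose) auto
    then show "\<exists>A\<in>P. (?n - 1) * ((?n - card A) choose t) < (?n - card A) * ((?n - 1) choose t)"
      using A0(1) by blast
  qed
  also have "\<dots> = (card P - 1) * ?n * ((?n - 1) choose t)"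
    using partition_on_sum_card_diff[OF M P] by (simp add: sum_distrib_right[symmetric])
  finally show ?thesis
    by (simp add: sum_distrib_left)
qed

lemma of_nat_divide_less_divide:
  fixes s c k n :: nat
  assumes "(n - 1) * s < (k - 1) * c" and "2 \<le> k" "2 \<le> n"
  shows "real s / (real k - 1) < real c / (real n - 1)"
proof -
  have "real ((n - 1) * s) < real ((k - 1) * c)"
    using assms(1) by (simp only: of_nat_less_iff)
  then have "(real n - 1) * real s < (real k - 1) * real c"
    using assms(2,3) by (simp add: of_nat_diff)
  then show ?thesis
    using assms(2,3) by (simp add: divide_less_eq less_divide_eq mult.commute)
qed

theorem corollary3:
  fixes m t :: nat
  assumes "m \<ge> 3" and "2 \<le> t" and "t \<le> m - 1"
  shows "strict_type_S {1..m} (K_edges m t) (\<lambda>e. e)"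
proof -
  let ?\<Delta> = "pin_Delta {1..m} (K_edges m t) (\<lambda>e. e)"
  let ?S = "(\<lambda>x. {x}) ` {1..m}"
  have t: "1 \<le> t"
    using assms(2) by simp
  have S: "partition_on {1..m} ?S" "card ?S = m"
    by (simp_all add: partition_on_singletons card_image)
  have \<Delta>S: "?\<Delta> ?S = real (m choose t) - real m * real ((m - 1) choose t) / (real m - 1)"
    using pin_Delta_K_edges[OF S(1) _ t] S(2) assms(1) by (simp add: sum.reindex)
  have "?\<Delta> ?S < ?\<Delta> P" if P: "partition_on {1..m} P" "2 \<le> card P" "P \<noteq> ?S" for P
  proof -
    have "(m - 1) * (\<Sum>A\<in>P. (m - card A) choose t) < (card P - 1) * (m * ((m - 1) choose t))"
      using sum_choose_cell_complements_less[of "{1..m}" P t] P assms by (simp add: mult.assoc)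
    then have "real (\<Sum>A\<in>P. (m - card A) choose t) / (real (card P) - 1) <
               real (m * ((m - 1) choose t)) / (real m - 1)"
      using P(2) assms(1) by (intro of_nat_divide_less_divide) auto
    then show ?thesis
      unfolding \<Delta>S pin_Delta_K_edges[OF P(1,2) t] by simp
  qed
  then show ?thesis
    unfolding strict_type_S_def singleton_partition_eq_image using S assms by auto
qed

end
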